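(* Let $m$ balls be placed independently and uniformly at random into $n$ bins, where $m=\Theta(n)$, and let $\mu = m/n$. Let $x>1$ and $k\ge 1$. Then with probability $1-2^{-\Omega(k)}$ there does not exist any $i$ such that the first $i$ bins contain at least $(1+1/x)\, i\mu + kx$ balls.
   Context: The bins are indexed $1,\dots,n$; "the first $i$ bins" means bins $1,\dots,i$. The constant in $\Omega(k)$ does not depend on $x,k,n$. *)

theory Defs
  imports "HOL-Probability.Probability"
begin

text \<open>Balls are indexed 0..m-1, bins 1..n. An outcome assigns each ball a bin;
  the uniform distribution over all assignments models independent uniform placement.\<close>
definition balls_into_bins :: "nat \<Rightarrow> nat \<Rightarrow> (nat \<Rightarrow> nat) pmf" where
  "balls_into_bins m n = pmf_of_set (PiE {..<m} (\<lambda>_. {1..n}))"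

definition prefix_load :: "nat \<Rightarrow> (nat \<Rightarrow> nat) \<Rightarrow> nat \<Rightarrow> nat" where
  "prefix_load m f i = card {b \<in> {..<m}. f b \<le> i}"

end

theory Submission
  imports Defs
begin

(* Reveal the bins one at a time. For r > 0 let M_i be the conditional expectation of r ^ L_J,
   where L_J is the load of the first J = n div 2 bins, given where the balls in the first i bins
   are; explicitly M_i = r ^ L_i * B_i ^ (m - L_i), B_i being the mean of r ^ [v <= J] over the
   bins v = i+1..n. Doob's maximal inequality bounds the probability that some M_i with i <= J
   exceeds E M_J * e^t = B_0 ^ m * e^t by e^-t. With r = 1 + 1/(2x), an overloaded prefix
   i <= J forces ln M_i >= m ln B_0 + k/12. An overloaded prefix i > J leaves too few balls in the
   last n - i <= J bins; reflecting the bins and taking r = 1 - 1/x, this forces the martingale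
   above B_0 ^ m * e^(k/2). Hence the probability is at most e^(-k/12) + e^(-k/2) <= 2^(-k/24) once
   k >= 24. The bound is uniform in m. *)

section \<open>Doob's maximal inequality on a finite space\<close>

lemma sum_eq_if_fiber_sums_eq:
  assumes "finite \<Omega>" "S \<subseteq> \<Omega>"
    and saturated: "\<And>f g. f \<in> S \<Longrightarrow> g \<in> \<Omega> \<Longrightarrow> t g = t f \<Longrightarrow> g \<in> S"
    and fibers: "\<And>f. f \<in> S \<Longrightarrow> sum a {g \<in> \<Omega>. t g = t f} = sum b {g \<in> \<Omega>. t g = t f}"
  shows "sum a S = sum b S"
proof -
  have "finite S" using assms(1,2) by (rule finite_subset[rotated])
  have fiber: "{g \<in> S. t g = y} = {g \<in> \<Omega>. t g = y}" if "y \<in> t ` S" for y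
    using that assms(2) saturated by blast
  have "sum a S = (\<Sum>y\<in>t ` S. sum a {g \<in> S. t g = y})"
    by (rule sum.group[symmetric]) (auto simp: \<open>finite S\<close>)
  also have "\<dots> = (\<Sum>y\<in>t ` S. sum b {g \<in> S. t g = y})"
  proof (rule sum.cong[OF refl])
    fix y assume "y \<in> t ` S"
    then show "sum a {g \<in> S. t g = y} = sum b {g \<in> S. t g = y}"
      using fibers fiber by auto
  qed
  also have "\<dots> = sum b S"
    by (rule sum.group) (auto simp: \<open>finite S\<close>)
  finally show ?thesis .
qed

lemma finite_doob_maximal_inequality:
  fixes M :: "nat \<Rightarrow> 'a \<Rightarrow> real" and t :: "nat \<Rightarrow> 'a \<Rightarrow> 'b"
  assumes "finite \<Omega>" "0 < \<Theta>" and nonneg: "\<And>f. f \<in> \<Omega> \<Longrightarrow> 0 \<le> M J f"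
    and adapted: "\<And>i i' f g. i' \<le> i \<Longrightarrow> f \<in> \<Omega> \<Longrightarrow> g \<in> \<Omega> \<Longrightarrow> t i f = t i g \<Longrightarrow>
      M i' f = M i' g"
    and martingale: "\<And>i f. i \<le> J \<Longrightarrow> f \<in> \<Omega> \<Longrightarrow>
      sum (M J) {g \<in> \<Omega>. t i g = t i f} = sum (M i) {g \<in> \<Omega>. t i g = t i f}"
  shows "\<Theta> * card {f \<in> \<Omega>. \<exists>i\<le>J. \<Theta> \<le> M i f} \<le> sum (M J) \<Omega>"
proof -
  (* S i: the first crossing of \<Theta> happens at time i. This is decided by t i, so S i is a union
     of fibres of t i and the martingale property applies on it. *)
  define S where "S i = {f \<in> \<Omega>. \<Theta> \<le> M i f \<and> (\<forall>i'<i. M i' f < \<Theta>)}" for i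
  have union: "{f \<in> \<Omega>. \<exists>i\<le>J. \<Theta> \<le> M i f} = (\<Union>i\<le>J. S i)"
  proof (intro equalityI subsetI)
    fix f assume "f \<in> {f \<in> \<Omega>. \<exists>i\<le>J. \<Theta> \<le> M i f}"
    then obtain i where f: "f \<in> \<Omega>" "i \<le> J" "\<Theta> \<le> M i f" by auto
    define i0 where "i0 = (LEAST i. \<Theta> \<le> M i f)"
    have "\<Theta> \<le> M i0 f" "i0 \<le> i" "\<forall>i'<i0. M i' f < \<Theta>"
      unfolding i0_def using f(3) by (auto intro: LeastI Least_le dest: not_less_Least)
    then show "f \<in> (\<Union>i\<le>J. S i)" using f unfolding S_def by auto
  qed (auto simp: S_def)
  have finite: "finite (S i)" for i using \<open>finite \<Omega>\<close> unfolding S_def by simp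
  have disjoint: "S i \<inter> S j = {}" if "i \<noteq> j" for i j
    using that unfolding S_def by (cases i j rule: linorder_cases) auto
  have stopped: "\<Theta> * card (S i) \<le> sum (M J) (S i)" if "i \<le> J" for i
  proof -
    have "\<Theta> * card (S i) \<le> sum (M i) (S i)"
      using sum_mono[of "S i" "\<lambda>_. \<Theta>" "M i"] unfolding S_def by (auto simp: mult.commute)
    also have "\<dots> = sum (M J) (S i)"
    proof (rule sum_eq_if_fiber_sums_eq[OF \<open>finite \<Omega>\<close>])
      fix f g assume "f \<in> S i" "g \<in> \<Omega>" "t i g = t i f"
      then show "g \<in> S i" using adapted[of _ i g f] unfolding S_def by auto
    qed (use martingale that in \<open>auto simp: S_def\<close>)
    finally show ?thesis .
  qed
  have "\<Theta> * card {f \<in> \<Omega>. \<exists>i\<le>J. \<Theta> \<le> M i f} = (\<Sum>i\<le>J. \<Theta> * card (S i))"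
    unfolding union using finite disjoint by (subst card_UN_disjoint) (auto simp: sum_distrib_left)
  also have "\<dots> \<le> (\<Sum>i\<le>J. sum (M J) (S i))"
    by (intro sum_mono stopped) simp
  also have "\<dots> = sum (M J) (\<Union>i\<le>J. S i)"
    using finite disjoint by (subst sum.UNION_disjoint) auto
  also have "\<dots> \<le> sum (M J) \<Omega>"
    using \<open>finite \<Omega>\<close> nonneg by (intro sum_mono2) (auto simp: S_def)
  finally show ?thesis .
qed

section \<open>Logarithmic estimates\<close>

(* For a ball that is uniform on the bins I+1..N, the mean of r^[ball lands in a bin <= J]. *)
definition tail_mean :: "real \<Rightarrow> real \<Rightarrow> real \<Rightarrow> real \<Rightarrow> real" where
  "tail_mean N J r I = ((J - I) * r + (N - J)) / (N - I)"

lemma tail_mean_pos: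
  assumes "0 \<le> I" "I \<le> J" "J < N" "0 < r"
  shows "0 < tail_mean N J r I"
  using assms unfolding tail_mean_def by (intro divide_pos_pos add_nonneg_pos) auto

lemma tail_mean_self:
  assumes "J < N"
  shows "tail_mean N J r J = 1"
  using assms unfolding tail_mean_def by simp

lemma tail_mean_gap:
  assumes "0 \<le> I" "I \<le> J" "2 * J \<le> N" "0 < N"
  obtains q where "1 / 2 \<le> q" "q \<le> 1" "r - tail_mean N J r I = (r - 1) * q"
proof
  show "1 / 2 \<le> (N - J) / (N - I)" "(N - J) / (N - I) \<le> 1"
    using assms by (simp_all add: field_simps)
  show "r - tail_mean N J r I = (r - 1) * ((N - J) / (N - I))"
    using assms unfolding tail_mean_def by (simp add: field_simps)
qed

(* The right-hand side is ln (M_I / M_0) for the exposure martingale when the first I of N bins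
   hold L of the M balls. *)
lemma ln_exposure_gain_ge:
  assumes "0 \<le> I" "I \<le> J" "J < N" "0 < r" "0 \<le> M"
  defines "B \<equiv> tail_mean N J r I"
  shows "L * ln (r / B) + M / N * I * (1 - r / B)
           \<le> L * ln r + (M - L) * ln B - M * ln (tail_mean N J r 0)"
proof -
  define B0 where "B0 = tail_mean N J r 0"
  have B: "0 < B" "0 < B0" unfolding B_def B0_def using assms by (auto intro: tail_mean_pos)
  have "M * (B0 - B) = M / N * I * (r - B)"
    using assms unfolding B_def B0_def tail_mean_def by (simp add: field_simps)
  then have scaled: "M * (B0 / B - 1) = M / N * I * (r / B - 1)"
    using B by (simp add: field_simps)
  have "ln (B0 / B) \<le> B0 / B - 1"
    using B by (intro ln_le_minus_one) simp
  then have "M * ln (B0 / B) \<le> M * (B0 / B - 1)"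
    using \<open>0 \<le> M\<close> by (rule mult_left_mono)
  then have "M * (ln B0 - ln B) \<le> M / N * I * (r / B - 1)"
    using B scaled by (simp add: ln_div)
  then have "M / N * I * (1 - r / B) \<le> M * (ln B - ln B0)"
    by (simp add: right_diff_distrib)
  moreover have "L * ln r + (M - L) * ln B - M * ln B0 = L * ln (r / B) + M * (ln B - ln B0)"
    using B \<open>0 < r\<close> by (simp add: ln_div algebra_simps)
  ultimately show ?thesis unfolding B0_def by linarith
qed

lemma ln_gain_ge_of_excess:
  fixes x k A L u :: real
  defines "e \<equiv> 1 / (2 * x)"
  assumes x: "1 < x" and k: "0 \<le> k" and A: "0 \<le> A" and u: "e / 3 \<le> u" "u \<le> e"
    and excess: "(1 + 1 / x) * A + k * x \<le> L"
  shows "k / 12 \<le> L * ln (1 + u) - A * u"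
proof -
  have e: "0 < e" "e \<le> 1 / 2" using x unfolding e_def by auto
  have ln_u: "u - u\<^sup>2 \<le> ln (1 + u)" "0 \<le> ln (1 + u)"
    using ln_one_plus_pos_lower_bound[of u] u e by auto
  define T where "T = (1 + 1 / x) * A + k * x"
  have "0 \<le> T" unfolding T_def using x k A by simp
  have "T * (u - u\<^sup>2) \<le> L * ln (1 + u)"
    using mult_left_mono[OF ln_u(1) \<open>0 \<le> T\<close>] mult_right_mono[OF excess ln_u(2)]
    unfolding T_def by linarith
  moreover have "u \<le> (1 + 1 / x) * (u - u\<^sup>2)"
  proof -
    have "u * (1 + 1 / x) \<le> e * (1 + 1 / x)" using u x by (intro mult_right_mono) auto
    also have "\<dots> \<le> 1 / x" unfolding e_def using x by (simp add: field_simps)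
    finally have "u * (u * (1 + 1 / x)) \<le> u * (1 / x)"
      using u e by (intro mult_left_mono) auto
    then show ?thesis by (simp add: power2_eq_square algebra_simps)
  qed
  then have "A * u \<le> A * ((1 + 1 / x) * (u - u\<^sup>2))" using A by (rule mult_left_mono)
  moreover have "k / 12 \<le> k * x * (u - u\<^sup>2)"
  proof -
    have "u * u \<le> u * (1 / 2)" using u e by (intro mult_left_mono) auto
    then have "e / 6 \<le> u - u\<^sup>2" using u unfolding power2_eq_square by linarith
    then have "k * x * (e / 6) \<le> k * x * (u - u\<^sup>2)" using k x by (intro mult_left_mono) auto
    then show ?thesis unfolding e_def using x by simp
  qed
  moreover have "T * (u - u\<^sup>2) = A * ((1 + 1 / x) * (u - u\<^sup>2)) + k * x * (u - u\<^sup>2)"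
    unfolding T_def by (simp add: algebra_simps)
  ultimately show ?thesis by linarith
qed

lemma ln_gain_ge_of_deficit:
  fixes x k A R B :: real
  defines "r \<equiv> 1 - 1 / x"
  assumes x: "1 < x" and k: "0 \<le> k" and R: "0 \<le> R" and A: "0 \<le> A"
    and B: "r + 1 / (2 * x) \<le> B" "B \<le> 1"
    and deficit: "R \<le> r * A - k * x"
  shows "k / 2 \<le> R * ln (r / B) + A * (1 - r / B)"
proof -
  define d where "d = 1 / x"
  have d: "0 < d" "d < 1" "r = 1 - d" "1 / (2 * x) = d / 2"
    using x unfolding d_def r_def by auto
  have "0 < r" using d by simp
  have B: "0 < B" "r \<le> B" "d / 2 \<le> B - r" "B \<le> 1" using B d by linarith+
  have "ln (B / r) \<le> B / r - 1" using B \<open>0 < r\<close> by (intro ln_le_minus_one) auto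
  then have "R * ln (B / r) \<le> R * ((B - r) / r)"
    using \<open>0 < r\<close> R by (intro mult_left_mono) (auto simp: field_simps)
  moreover have "R * ln (r / B) = - (R * ln (B / r))"
    using B \<open>0 < r\<close> by (simp add: ln_div algebra_simps)
  moreover have "B - r \<le> 1 - r / B"
  proof -
    have "(B - r) * B \<le> B - r" using B by (intro mult_left_le) auto
    then show ?thesis using B by (simp add: field_simps)
  qed
  then have "A * (B - r) \<le> A * (1 - r / B)" using A by (rule mult_left_mono)
  moreover have "k * x \<le> (A * r - R) / r"
  proof -
    have "k * x * r \<le> k * x" unfolding r_def using k x by (intro mult_left_le) auto
    then show ?thesis using deficit \<open>0 < r\<close> by (simp add: le_divide_eq mult_ac)
  qed
  then have "(B - r) * (k * x) \<le> (B - r) * ((A * r - R) / r)"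
    using B by (intro mult_left_mono) auto
  moreover have "(B - r) * ((A * r - R) / r) = A * (B - r) - R * ((B - r) / r)"
    using \<open>0 < r\<close> by (simp add: field_simps)
  moreover have "d / 2 * (k * x) \<le> (B - r) * (k * x)"
    using B k x by (intro mult_right_mono) auto
  moreover have "d / 2 * (k * x) = k / 2" unfolding d_def using x by simp
  ultimately show ?thesis by linarith
qed

lemma ln_exposure_gain_ge_of_excess:
  fixes N J I M L x k :: real
  defines "r \<equiv> 1 + 1 / (2 * x)"
  assumes I: "0 \<le> I" "I \<le> J" and N: "2 * J \<le> N" "0 < N" and M: "0 \<le> M"
    and x: "1 < x" and k: "0 \<le> k"
    and excess: "(1 + 1 / x) * I * (M / N) + k * x \<le> L"
  shows "M * ln (tail_mean N J r 0) + k / 12 \<le> L * ln r + (M - L) * ln (tail_mean N J r I)"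
proof -
  define e where "e = 1 / (2 * x)"
  define B where "B = tail_mean N J r I"
  define u where "u = r / B - 1"
  have e: "0 < e" "e \<le> 1 / 2" "r = 1 + e" using x unfolding e_def r_def by auto
  obtain q where q: "1 / 2 \<le> q" "q \<le> 1" and gap: "r - B = (r - 1) * q"
    using tail_mean_gap[OF I N, of r] unfolding B_def by blast
  have "r - B = e * q" using gap e(3) by simp
  moreover have "e / 2 \<le> e * q" "e * q \<le> e"
    using mult_left_mono[OF q(1), of e] mult_left_mono[OF q(2), of e] e by auto
  ultimately have B: "1 \<le> B" "B \<le> 5 / 4" using e by linarith+
  have u_eq: "u = e * q / B"
    using B \<open>r - B = e * q\<close> unfolding u_def by (simp add: field_simps)
  have "e / 3 \<le> u"
  proof -
    have "e / 3 * B \<le> e / 3 * (5 / 4)" using B e by (intro mult_left_mono) auto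
    then have "e / 3 * B \<le> e * q" using \<open>e / 2 \<le> e * q\<close> e by linarith
    then show ?thesis unfolding u_eq using B by (simp add: le_divide_eq)
  qed
  moreover have "u \<le> e"
  proof -
    have "e \<le> e * B" using B e by simp
    then show ?thesis unfolding u_eq using B \<open>e * q \<le> e\<close> by (simp add: divide_le_eq)
  qed
  moreover have "(1 + 1 / x) * (I * (M / N)) + k * x \<le> L" using excess by (simp add: mult.assoc)
  ultimately have "k / 12 \<le> L * ln (1 + u) - I * (M / N) * u"
    using x k I N M unfolding e_def by (intro ln_gain_ge_of_excess) auto
  moreover have "L * ln (r / B) + M / N * I * (1 - r / B)
      \<le> L * ln r + (M - L) * ln B - M * ln (tail_mean N J r 0)"
    unfolding B_def using I N e M by (intro ln_exposure_gain_ge) auto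
  moreover have "r / B = 1 + u" "1 - r / B = - u" unfolding u_def by simp_all
  ultimately show ?thesis unfolding B_def by (simp add: algebra_simps)
qed

lemma ln_exposure_gain_ge_of_deficit:
  fixes N J I M R x k :: real
  defines "r \<equiv> 1 - 1 / x"
  assumes I: "0 \<le> I" "I \<le> J" and N: "2 * J \<le> N" "0 < N" and M: "0 \<le> M"
    and x: "1 < x" and k: "0 \<le> k" and R: "0 \<le> R"
    and deficit: "R \<le> (1 - 1 / x) * I * (M / N) - k * x"
  shows "M * ln (tail_mean N J r 0) + k / 2 \<le> R * ln r + (M - R) * ln (tail_mean N J r I)"
proof -
  define d where "d = 1 / x"
  define B where "B = tail_mean N J r I"
  have d: "0 < d" "r = 1 - d" "1 / (2 * x) = d / 2" using x unfolding d_def r_def by auto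
  obtain q where q: "1 / 2 \<le> q" "q \<le> 1" and gap: "r - B = (r - 1) * q"
    using tail_mean_gap[OF I N, of r] unfolding B_def by blast
  have "B - r = d * q" using gap d(2) by (simp add: algebra_simps)
  moreover have "d / 2 \<le> d * q" "d * q \<le> d"
    using mult_left_mono[OF q(1), of d] mult_left_mono[OF q(2), of d] d by auto
  ultimately have "r + 1 / (2 * x) \<le> B" "B \<le> 1" using d by linarith+
  moreover have "R \<le> r * (I * (M / N)) - k * x" using deficit unfolding r_def by (simp add: mult_ac)
  ultimately have "k / 2 \<le> R * ln (r / B) + I * (M / N) * (1 - r / B)"
    using x k R I N M unfolding r_def by (intro ln_gain_ge_of_deficit) auto
  moreover have "R * ln (r / B) + M / N * I * (1 - r / B)
      \<le> R * ln r + (M - R) * ln B - M * ln (tail_mean N J r 0)"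
    unfolding B_def using I N x M unfolding r_def by (intro ln_exposure_gain_ge) auto
  ultimately show ?thesis unfolding B_def by (simp add: algebra_simps)
qed

section \<open>The exposure martingale of balls in bins\<close>

abbreviation bin_assignments :: "nat \<Rightarrow> nat \<Rightarrow> (nat \<Rightarrow> nat) set" where
  "bin_assignments m n \<equiv> PiE {..<m} (\<lambda>_. {1..n})"

definition prefix_assignment :: "nat \<Rightarrow> nat \<Rightarrow> (nat \<Rightarrow> nat) \<Rightarrow> nat \<Rightarrow> nat option" where
  "prefix_assignment m i f b = (if b < m \<and> f b \<le> i then Some (f b) else None)"

(* The conditional expectation of r ^ prefix_load m f J given prefix_assignment m i f, for i <= J:
   each ball not among the revealed ones is uniform on the bins i+1..n. *)
definition exposure_martingale :: "nat \<Rightarrow> nat \<Rightarrow> nat \<Rightarrow> real \<Rightarrow> nat \<Rightarrow> (nat \<Rightarrow> nat) \<Rightarrow> real" where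
  "exposure_martingale m n J r i f =
     (\<Prod>b<m. if f b \<le> i then r else tail_mean (real n) (real J) r (real i))"

lemma prefix_assignment_mono:
  assumes "i' \<le> i" "prefix_assignment m i f = prefix_assignment m i g"
  shows "prefix_assignment m i' f = prefix_assignment m i' g"
proof
  fix b
  from fun_cong[OF assms(2), of b] assms(1) show "prefix_assignment m i' f b = prefix_assignment m i' g b"
    unfolding prefix_assignment_def by (auto split: if_splits)
qed

lemma exposure_martingale_cong:
  assumes "prefix_assignment m i f = prefix_assignment m i g"
  shows "exposure_martingale m n J r i f = exposure_martingale m n J r i g"
  unfolding exposure_martingale_def
proof (rule prod.cong[OF refl])
  fix b assume "b \<in> {..<m}"
  with fun_cong[OF assms, of b] have "f b \<le> i \<longleftrightarrow> g b \<le> i"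
    unfolding prefix_assignment_def by (auto split: if_splits)
  then show "(if f b \<le> i then r else tail_mean n J r i) = (if g b \<le> i then r else tail_mean n J r i)"
    by simp
qed

lemma prefix_assignment_fiber:
  assumes "f \<in> bin_assignments m n"
  shows "{g \<in> bin_assignments m n. prefix_assignment m i g = prefix_assignment m i f}
    = PiE {..<m} (\<lambda>b. if f b \<le> i then {f b} else {i<..n})"
proof (intro equalityI subsetI)
  fix g assume "g \<in> {g \<in> bin_assignments m n. prefix_assignment m i g = prefix_assignment m i f}"
  then have g: "g \<in> bin_assignments m n" and same: "prefix_assignment m i g = prefix_assignment m i f"
    by auto
  have "g b \<in> (if f b \<le> i then {f b} else {i<..n})" if "b \<in> {..<m}" for b
    using fun_cong[OF same, of b] PiE_mem[OF g that] that
    unfolding prefix_assignment_def by (auto split: if_splits)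
  then show "g \<in> PiE {..<m} (\<lambda>b. if f b \<le> i then {f b} else {i<..n})"
    using PiE_arb[OF g] by (intro PiE_I)
next
  fix g assume g: "g \<in> PiE {..<m} (\<lambda>b. if f b \<le> i then {f b} else {i<..n})"
  have "g \<in> bin_assignments m n"
  proof (rule PiE_I)
    fix b assume "b \<in> {..<m}"
    with PiE_mem[OF g this] PiE_mem[OF assms this] show "g b \<in> {1..n}"
      by (auto split: if_splits)
  qed (rule PiE_arb[OF g])
  moreover have "prefix_assignment m i g b = prefix_assignment m i f b" for b
    using PiE_mem[OF g, of b] unfolding prefix_assignment_def by (auto split: if_splits)
  ultimately show "g \<in> {g \<in> bin_assignments m n. prefix_assignment m i g = prefix_assignment m i f}"
    by auto
qed

lemma sum_tail_weights:
  assumes "i \<le> J" "J < n"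
  shows "(\<Sum>v\<in>{i<..n}. if v \<le> J then r else 1) = (real n - real i) * tail_mean n J r i"
proof -
  have "{i<..n} \<inter> {v. v \<le> J} = {i<..J}" "{i<..n} \<inter> - {v. v \<le> J} = {J<..n}"
    using assms by auto
  then have "(\<Sum>v\<in>{i<..n}. if v \<le> J then r else 1) = (real J - real i) * r + (real n - real J)"
    using assms by (simp add: sum.If_cases)
  then show ?thesis using assms unfolding tail_mean_def by simp
qed

lemma exposure_martingale_fiber_sum:
  assumes "f \<in> bin_assignments m n" "i \<le> J" "J < n"
  shows "sum (exposure_martingale m n J r J)
           {g \<in> bin_assignments m n. prefix_assignment m i g = prefix_assignment m i f}
       = sum (exposure_martingale m n J r i)
           {g \<in> bin_assignments m n. prefix_assignment m i g = prefix_assignment m i f}"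
    (is "sum _ ?F = _")
proof -
  define F where "F = ?F"
  define A where "A b = (if f b \<le> i then {f b} else {i<..n})" for b
  define w where "w v = (if v \<le> J then r else 1)" for v
  have F: "F = PiE {..<m} A" unfolding F_def A_def using assms(1) by (rule prefix_assignment_fiber)
  have split_mean: "tail_mean n J r J = 1" using assms by (simp add: tail_mean_self)
  have "exposure_martingale m n J r J g = (\<Prod>b<m. w (g b))" for g
    unfolding exposure_martingale_def w_def split_mean ..
  then have "sum (exposure_martingale m n J r J) F = (\<Prod>b<m. \<Sum>v\<in>A b. w v)"
    unfolding F by (simp add: prod_sum_PiE A_def[abs_def])
  also have "\<dots> = (\<Prod>b<m. card (A b) * (if f b \<le> i then r else tail_mean n J r i))"
    using assms sum_tail_weights[of i J n r] by (intro prod.cong) (auto simp: A_def w_def)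
  also have "\<dots> = card F * exposure_martingale m n J r i f"
    unfolding F exposure_martingale_def by (simp add: card_PiE prod.distrib)
  also have "\<dots> = sum (exposure_martingale m n J r i) F"
  proof -
    have "exposure_martingale m n J r i g = exposure_martingale m n J r i f" if "g \<in> F" for g
      using that unfolding F_def by (auto intro: exposure_martingale_cong)
    then show ?thesis by simp
  qed
  finally show ?thesis unfolding F_def .
qed

lemma exposure_martingale_start:
  assumes "f \<in> bin_assignments m n"
  shows "exposure_martingale m n J r 0 f = tail_mean n J r 0 ^ m"
proof -
  have pos: "f b \<noteq> 0" if "b \<in> {..<m}" for b using PiE_mem[OF assms that] by auto
  have "exposure_martingale m n J r 0 f = (\<Prod>b<m. tail_mean n J r 0)"
    unfolding exposure_martingale_def by (rule prod.cong[OF refl]) (simp add: pos)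
  then show ?thesis by simp
qed

lemma exposure_martingale_eq_power:
  "exposure_martingale m n J r i f
     = r ^ prefix_load m f i * tail_mean n J r i ^ (m - prefix_load m f i)"
proof -
  have "{..<m} \<inter> - {b. f b \<le> i} = {..<m} - {b \<in> {..<m}. f b \<le> i}" by auto
  moreover have "card ({..<m} - {b \<in> {..<m}. f b \<le> i}) = m - prefix_load m f i"
    unfolding prefix_load_def by (subst card_Diff_subset) auto
  moreover have "{..<m} \<inter> {b. f b \<le> i} = {b \<in> {..<m}. f b \<le> i}" by auto
  ultimately show ?thesis
    unfolding exposure_martingale_def prefix_load_def by (simp add: prod.If_cases)
qed

lemma prefix_load_le: "prefix_load m f i \<le> m"
  unfolding prefix_load_def by (rule order.trans[OF card_mono[of "{..<m}"]]) auto

lemma ln_exposure_martingale: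
  assumes "0 < r" "0 < tail_mean n J r i"
  shows "ln (exposure_martingale m n J r i f)
    = prefix_load m f i * ln r + (m - real (prefix_load m f i)) * ln (tail_mean n J r i)"
  using assms prefix_load_le[of m f i]
  by (simp add: exposure_martingale_eq_power ln_mult ln_realpow)

lemma exposure_martingale_maximal_bound:
  assumes "J < n" "0 < r"
  shows "real (card {f \<in> bin_assignments m n. \<exists>i\<le>J.
            tail_mean n J r 0 ^ m * exp t \<le> exposure_martingale m n J r i f})
         \<le> exp (- t) * card (bin_assignments m n)"
proof -
  let ?\<Omega> = "bin_assignments m n"
  let ?M = "exposure_martingale m n J r"
  have "finite ?\<Omega>" by (simp add: finite_PiE)
  have B0: "0 < tail_mean n J r 0" using assms by (intro tail_mean_pos) auto
  have "tail_mean n J r 0 ^ m * exp t * card {f \<in> ?\<Omega>. \<exists>i\<le>J. tail_mean n J r 0 ^ m * exp t \<le> ?M i f}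
      \<le> sum (?M J) ?\<Omega>"
  proof (rule finite_doob_maximal_inequality[where t = "prefix_assignment m"])
    show "finite ?\<Omega>" "0 < tail_mean n J r 0 ^ m * exp t" using \<open>finite ?\<Omega>\<close> B0 by auto
    show "0 \<le> ?M J f" for f
      using assms by (auto simp: exposure_martingale_def tail_mean_self intro: prod_nonneg)
    show "?M i' f = ?M i' g" if "i' \<le> i" "prefix_assignment m i f = prefix_assignment m i g" for i i' f g
      using prefix_assignment_mono[OF that] by (rule exposure_martingale_cong)
    show "sum (?M J) {g \<in> ?\<Omega>. prefix_assignment m i g = prefix_assignment m i f}
        = sum (?M i) {g \<in> ?\<Omega>. prefix_assignment m i g = prefix_assignment m i f}"
      if "i \<le> J" "f \<in> ?\<Omega>" for i f
      using that assms by (intro exposure_martingale_fiber_sum) simp_all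
  qed
  also have "sum (?M J) ?\<Omega> = sum (?M 0) ?\<Omega>"
  proof (rule sum_eq_if_fiber_sums_eq[where t = "prefix_assignment m 0"])
    show "sum (?M J) {g \<in> ?\<Omega>. prefix_assignment m 0 g = prefix_assignment m 0 f}
        = sum (?M 0) {g \<in> ?\<Omega>. prefix_assignment m 0 g = prefix_assignment m 0 f}"
      if "f \<in> ?\<Omega>" for f
      using that assms by (intro exposure_martingale_fiber_sum) simp_all
  qed (use \<open>finite ?\<Omega>\<close> in simp_all)
  also have "\<dots> = card ?\<Omega> * tail_mean n J r 0 ^ m"
    by (simp add: exposure_martingale_start)
  finally show ?thesis
    using B0 by (simp add: exp_minus field_simps)
qed

section \<open>Reflecting the bins\<close>

definition reflect_bins :: "nat \<Rightarrow> nat \<Rightarrow> (nat \<Rightarrow> nat) \<Rightarrow> nat \<Rightarrow> nat" where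
  "reflect_bins m n f = restrict (\<lambda>b. Suc n - f b) {..<m}"

lemma reflect_bins_in:
  assumes "f \<in> bin_assignments m n"
  shows "reflect_bins m n f \<in> bin_assignments m n"
  using PiE_mem[OF assms] unfolding reflect_bins_def by (force simp: restrict_PiE_iff)

lemma reflect_bins_reflect_bins:
  assumes "f \<in> bin_assignments m n"
  shows "reflect_bins m n (reflect_bins m n f) = f"
proof
  fix b
  show "reflect_bins m n (reflect_bins m n f) b = f b"
    using PiE_mem[OF assms, of b] PiE_arb[OF assms, of b] unfolding reflect_bins_def by auto
qed

lemma card_reflect_bins:
  "card {f \<in> bin_assignments m n. P (reflect_bins m n f)} = card {f \<in> bin_assignments m n. P f}"
proof (rule bij_betw_same_card[of "reflect_bins m n"], rule bij_betw_byWitness)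
  show "reflect_bins m n ` {f \<in> bin_assignments m n. P (reflect_bins m n f)}
      \<subseteq> {f \<in> bin_assignments m n. P f}"
    using reflect_bins_in by blast
  show "reflect_bins m n ` {f \<in> bin_assignments m n. P f}
      \<subseteq> {f \<in> bin_assignments m n. P (reflect_bins m n f)}"
  proof (rule image_subsetI)
    fix g assume "g \<in> {f \<in> bin_assignments m n. P f}"
    then show "reflect_bins m n g \<in> {f \<in> bin_assignments m n. P (reflect_bins m n f)}"
      using reflect_bins_in[of g] reflect_bins_reflect_bins[of g] by simp
  qed
qed (simp_all add: reflect_bins_reflect_bins)

lemma prefix_load_reflect_bins:
  assumes "f \<in> bin_assignments m n" "i \<le> n"
  shows "prefix_load m (reflect_bins m n f) (n - i) = m - prefix_load m f i"
proof -
  have "reflect_bins m n f b \<le> n - i \<longleftrightarrow> \<not> f b \<le> i" if "b \<in> {..<m}" for b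
    using PiE_mem[OF assms(1) that] assms(2) that unfolding reflect_bins_def by auto
  then have "{b \<in> {..<m}. reflect_bins m n f b \<le> n - i} = {..<m} - {b \<in> {..<m}. f b \<le> i}"
    by blast
  moreover have "card ({..<m} - {b \<in> {..<m}. f b \<le> i}) = m - prefix_load m f i"
    unfolding prefix_load_def by (subst card_Diff_subset) auto
  ultimately show ?thesis unfolding prefix_load_def by simp
qed

section \<open>Overloaded prefixes\<close>

lemma exposure_martingale_ge_of_early_overload:
  assumes "f \<in> bin_assignments m n" "i \<le> J" "2 * J \<le> n" "1 \<le> n" "1 < x" "0 \<le> k"
    and overload: "(1 + 1 / x) * real i * (real m / real n) + k * x \<le> real (prefix_load m f i)"
  defines "r \<equiv> 1 + 1 / (2 * x)"
  shows "tail_mean n J r 0 ^ m * exp (k / 12) \<le> exposure_martingale m n J r i f"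
proof -
  have "0 < r" unfolding r_def using \<open>1 < x\<close> by (simp add: add_pos_pos)
  moreover have "J < n" using \<open>2 * J \<le> n\<close> \<open>1 \<le> n\<close> by linarith
  ultimately have B: "0 < tail_mean n J r i" "0 < tail_mean n J r 0"
    using \<open>i \<le> J\<close> by (auto intro!: tail_mean_pos)
  have "m * ln (tail_mean n J r 0) + k / 12
      \<le> prefix_load m f i * ln r + (m - real (prefix_load m f i)) * ln (tail_mean n J r i)"
    unfolding r_def using \<open>1 < x\<close> \<open>0 \<le> k\<close> \<open>i \<le> J\<close> \<open>2 * J \<le> n\<close> \<open>1 \<le> n\<close> overload
    by (intro ln_exposure_gain_ge_of_excess) auto
  then have "ln (tail_mean n J r 0 ^ m * exp (k / 12)) \<le> ln (exposure_martingale m n J r i f)"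
    using B \<open>0 < r\<close> by (simp add: ln_exposure_martingale ln_mult ln_realpow)
  then show ?thesis
    using B \<open>0 < r\<close> by (simp add: exposure_martingale_def prod_pos)
qed

lemma deficit_of_complementary_excess:
  fixes N M L j x k :: real
  assumes "2 * j \<le> N" "0 < N" "0 \<le> M" "1 < x"
    and excess: "(1 + 1 / x) * (N - j) * (M / N) + k * x \<le> L"
  shows "M - L \<le> (1 - 1 / x) * j * (M / N) - k * x"
proof -
  define \<mu> where "\<mu> = M / N"
  have "0 \<le> \<mu>" "M = N * \<mu>" unfolding \<mu>_def using assms by auto
  have "j * \<mu> / x \<le> (N - j) * \<mu> / x"
    using assms \<open>0 \<le> \<mu>\<close> by (intro divide_right_mono mult_right_mono) auto
  moreover have "(1 + 1 / x) * (N - j) * \<mu> = (N - j) * \<mu> + (N - j) * \<mu> / x"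
    "(1 - 1 / x) * j * \<mu> = j * \<mu> - j * \<mu> / x"
    by (simp_all add: algebra_simps)
  ultimately show ?thesis
    using excess \<open>M = N * \<mu>\<close> unfolding \<mu>_def[symmetric] by (simp add: algebra_simps)
qed

lemma exposure_martingale_ge_of_late_overload:
  assumes f: "f \<in> bin_assignments m n" and "J < i" "i \<le> n" "2 * J \<le> n" "n \<le> 2 * J + 1"
    and "1 < x" "0 \<le> k"
    and overload: "(1 + 1 / x) * real i * (real m / real n) + k * x \<le> real (prefix_load m f i)"
  defines "r \<equiv> 1 - 1 / x"
  shows "tail_mean n J r 0 ^ m * exp (k / 2)
    \<le> exposure_martingale m n J r (n - i) (reflect_bins m n f)"
proof -
  define j where "j = n - i"
  define R where "R = prefix_load m (reflect_bins m n f) j"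
  have "j \<le> J" "J < n" "real i = real n - real j"
    unfolding j_def using \<open>J < i\<close> \<open>i \<le> n\<close> \<open>n \<le> 2 * J + 1\<close> by auto
  have "0 < r" unfolding r_def using \<open>1 < x\<close> by simp
  then have B: "0 < tail_mean n J r j" "0 < tail_mean n J r 0"
    using \<open>j \<le> J\<close> \<open>J < n\<close> by (auto intro!: tail_mean_pos)
  have "real R = real m - real (prefix_load m f i)"
    unfolding R_def j_def using prefix_load_reflect_bins[OF f \<open>i \<le> n\<close>] prefix_load_le[of m f i]
    by simp
  also have "\<dots> \<le> (1 - 1 / x) * real j * (real m / real n) - k * x"
    using \<open>j \<le> J\<close> \<open>2 * J \<le> n\<close> \<open>J < n\<close> \<open>1 < x\<close> overload unfolding \<open>real i = real n - real j\<close>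
    by (intro deficit_of_complementary_excess) auto
  finally have "m * ln (tail_mean n J r 0) + k / 2 \<le> R * ln r + (m - real R) * ln (tail_mean n J r j)"
    unfolding r_def using \<open>1 < x\<close> \<open>0 \<le> k\<close> \<open>j \<le> J\<close> \<open>J < n\<close> \<open>2 * J \<le> n\<close>
    by (intro ln_exposure_gain_ge_of_deficit) auto
  then have "ln (tail_mean n J r 0 ^ m * exp (k / 2))
      \<le> ln (exposure_martingale m n J r j (reflect_bins m n f))"
    using B \<open>0 < r\<close> unfolding R_def by (simp add: ln_exposure_martingale ln_mult ln_realpow)
  then show ?thesis
    using B \<open>0 < r\<close> unfolding j_def by (simp add: exposure_martingale_def prod_pos)
qed

lemma prefix_overload_exposed:
  assumes f: "f \<in> bin_assignments m n" and "i \<in> {1..n}" "1 < x" "0 \<le> k" "J = n div 2"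
    and overload: "(1 + 1 / x) * real i * (real m / real n) + k * x \<le> real (prefix_load m f i)"
  shows "(\<exists>j\<le>J. tail_mean n J (1 + 1 / (2 * x)) 0 ^ m * exp (k / 12)
            \<le> exposure_martingale m n J (1 + 1 / (2 * x)) j f)
       \<or> (\<exists>j\<le>J. tail_mean n J (1 - 1 / x) 0 ^ m * exp (k / 2)
            \<le> exposure_martingale m n J (1 - 1 / x) j (reflect_bins m n f))"
proof (cases "i \<le> J")
  case True
  have "2 * J \<le> n" "1 \<le> n" using \<open>J = n div 2\<close> \<open>i \<in> {1..n}\<close> by auto
  with True show ?thesis
    using exposure_martingale_ge_of_early_overload[OF f True _ _ \<open>1 < x\<close> \<open>0 \<le> k\<close> overload] by blast
next
  case False
  have "J < i" "i \<le> n" "2 * J \<le> n" "n \<le> 2 * J + 1" "n - i \<le> J"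
    using False \<open>J = n div 2\<close> \<open>i \<in> {1..n}\<close> by auto
  then show ?thesis
    using exposure_martingale_ge_of_late_overload[OF f _ _ _ _ \<open>1 < x\<close> \<open>0 \<le> k\<close> overload] by blast
qed

lemma prob_prefix_overload_le:
  assumes "1 \<le> n" "1 < x" "0 \<le> k"
  shows "measure_pmf.prob (balls_into_bins m n)
      {f. \<exists>i\<in>{1..n}. (1 + 1 / x) * real i * (real m / real n) + k * x \<le> real (prefix_load m f i)}
    \<le> exp (- k / 12) + exp (- k / 2)"
proof -
  let ?\<Omega> = "bin_assignments m n"
  define E where "E = {f. \<exists>i\<in>{1..n}.
    (1 + 1 / x) * real i * (real m / real n) + k * x \<le> real (prefix_load m f i)}"
  define J where "J = n div 2"
  define r1 where "r1 = 1 + 1 / (2 * x)"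
  define r2 where "r2 = 1 - 1 / x"
  define U1 where "U1 = {f \<in> ?\<Omega>. \<exists>i\<le>J.
    tail_mean n J r1 0 ^ m * exp (k / 12) \<le> exposure_martingale m n J r1 i f}"
  define U2 where "U2 = {f \<in> ?\<Omega>. \<exists>i\<le>J.
    tail_mean n J r2 0 ^ m * exp (k / 2) \<le> exposure_martingale m n J r2 i (reflect_bins m n f)}"
  have "J < n" unfolding J_def using \<open>1 \<le> n\<close> by simp
  have r: "0 < r1" "0 < r2" unfolding r1_def r2_def using \<open>1 < x\<close> by (auto simp: add_pos_pos)
  have "finite ?\<Omega>" "?\<Omega> \<noteq> {}" using \<open>1 \<le> n\<close> by (auto simp: finite_PiE PiE_eq_empty_iff)
  have "?\<Omega> \<inter> E \<subseteq> U1 \<union> U2"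
    using prefix_overload_exposed[OF _ _ \<open>1 < x\<close> \<open>0 \<le> k\<close> J_def]
    unfolding E_def U1_def U2_def r1_def r2_def by blast
  then have "card (?\<Omega> \<inter> E) \<le> card (U1 \<union> U2)"
    by (rule card_mono[rotated], intro finite_subset[OF _ \<open>finite ?\<Omega>\<close>]) (auto simp: U1_def U2_def)
  also have "\<dots> \<le> card U1 + card U2" by (rule card_Un_le)
  finally have "card (?\<Omega> \<inter> E) \<le> card U1 + card U2" .
  moreover have "card U1 \<le> exp (- (k / 12)) * card ?\<Omega>"
    unfolding U1_def using \<open>J < n\<close> r by (intro exposure_martingale_maximal_bound)
  moreover have "card U2 = card {f \<in> ?\<Omega>. \<exists>i\<le>J.
      tail_mean n J r2 0 ^ m * exp (k / 2) \<le> exposure_martingale m n J r2 i f}"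
    unfolding U2_def by (rule card_reflect_bins)
  then have "card U2 \<le> exp (- (k / 2)) * card ?\<Omega>"
    using exposure_martingale_maximal_bound[OF \<open>J < n\<close> r(2), of m "k / 2"] by simp
  ultimately have "card (?\<Omega> \<inter> E) \<le> (exp (- k / 12) + exp (- k / 2)) * card ?\<Omega>"
    by (simp add: algebra_simps)
  then show ?thesis
    using \<open>finite ?\<Omega>\<close> \<open>?\<Omega> \<noteq> {}\<close> unfolding E_def[symmetric] balls_into_bins_def
    by (simp add: measure_pmf_of_set divide_le_eq card_gt_0_iff)
qed

lemma exp_sum_le_two_powr:
  fixes k :: real
  assumes "24 \<le> k"
  shows "exp (- k / 12) + exp (- k / 2) \<le> 2 powr (- (1 / 24) * k)"
proof -
  have "2 \<le> exp (k / 24)"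
    using exp_ge_add_one_self[of "k / 24"] assms by linarith
  then have "2 * exp (- k / 12) \<le> exp (k / 24) * exp (- k / 12)" by simp
  also have "\<dots> = exp (- k / 24)" by (simp flip: exp_add)
  also have "\<dots> \<le> 2 powr (- (1 / 24) * k)"
    using ln_le_minus_one[of 2] assms by (simp add: powr_def mult_left_le)
  finally have "2 * exp (- k / 12) \<le> 2 powr (- (1 / 24) * k)" .
  moreover have "exp (- k / 2) \<le> exp (- k / 12)" using assms by simp
  ultimately show ?thesis by linarith
qed

theorem mainTheorem2:
  fixes c1 c2 :: real
  assumes "c1 > 0" and "c2 > 0"
  shows "\<exists>c>0. \<exists>K::real. \<forall>(n::nat) (m::nat) (x::real) (k::real).
    n \<ge> 1 \<longrightarrow> c1 * real n \<le> real m \<longrightarrow> real m \<le> c2 * real n \<longrightarrow>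
    x > 1 \<longrightarrow> k \<ge> 1 \<longrightarrow> k \<ge> K \<longrightarrow>
    measure_pmf.prob (balls_into_bins m n)
      {f. \<exists>i\<in>{1..n}. real (prefix_load m f i)
            \<ge> (1 + 1 / x) * real i * (real m / real n) + k * x}
    \<le> 2 powr (- c * k)"
proof (rule exI[of _ "1 / 24"], rule conjI, simp, rule exI[of _ 24], intro allI impI)
  fix n m :: nat and x k :: real
  assume "1 \<le> n" "c1 * real n \<le> real m" "real m \<le> c2 * real n" "1 < x" "1 \<le> k" "24 \<le> k"
  then show "measure_pmf.prob (balls_into_bins m n)
      {f. \<exists>i\<in>{1..n}. real (prefix_load m f i) \<ge> (1 + 1 / x) * real i * (real m / real n) + k * x}
    \<le> 2 powr (- (1 / 24) * k)"
    using prob_prefix_overload_le[of n x k m] exp_sum_le_two_powr[of k] by simp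
qed

end
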